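(* Let $m,n,a$ be integers satisfying $0\le a\le m\le n$. Then $$B_m=(-1)^{a}\sum_{k=1}^{n+1}\frac{(-1)^{k+1}}{k}\binom{n+1}{k}\left[\sum_{i=1}^{k-1}i^a(k-i)^{m-a}+\delta_{a,m}\,k^m\right],$$ where $\delta_{a,m}$ is the Kronecker delta. Furthermore, if $m\ge 2$, then $$B_m=(-1)^{a}\sum_{k=1}^{n+1}\frac{(-1)^{k+1}}{k}\binom{n+1}{k}\sum_{i=1}^{k-1}i^a(k-i)^{m-a}.$$
   Context: The Bernoulli numbers $B_m$ ($m\ge 0$) are defined by the generating function $\frac{x}{e^x-1}=\sum_{m=0}^{\infty}\frac{B_m}{m!}x^m$ (so $B_1=-1/2$). An empty sum (e.g. $\sum_{i=1}^{0}$) is $0$; in the sums all bases $i$, $k-i$, $k$ are positive integers, and $t^0=1$. *)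

theory Defs
  imports "HOL-Computational_Algebra.Formal_Power_Series"
begin

text \<open>Bernoulli numbers via the generating function x/(e^x - 1) = sum B_m x^m / m!,
  so that B_1 = -1/2.  The quotient is taken in the field of formal power series.\<close>
definition bernoulli :: "nat \<Rightarrow> real" where
  "bernoulli m = fact m * fps_nth (fps_X / (fps_exp 1 - 1)) m"

end

theory Submission
  imports Defs
begin

(*
  Let L_N g denote the weighted sum on the right-hand side, with N = n + 1. Since
  (1 - e^x)^N is divisible by x^N, the alternating sums of (N choose k) k^j vanish for j < N,
  so L_N extracts the coefficient of k from any polynomial in k of degree at most N that
  vanishes at 0. Expanding (k - i)^b binomially and applying Faulhaber's formula, the linear
  coefficient of the polynomial sum_{i<k} i^a (k - i)^b with a + b = m is (-1)^b B_m. The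
  cases a = 0 and a = m of this polynomial differ by exactly k^m, which yields the reflection
  law (-1)^m B_m = B_m + delta_{m,1}; it accounts for the sign (-1)^a and for the correction
  term delta_{a,m} k^m.
*)

lemma fps_exp_minus_one:
  "fps_exp (c :: 'a :: field_char_0) - 1 = fps_X * Abs_fps (\<lambda>n. c ^ Suc n / fact (Suc n))"
proof (rule fps_ext)
  show "fps_nth (fps_exp c - 1) n = fps_nth (fps_X * Abs_fps (\<lambda>n. c ^ Suc n / fact (Suc n))) n" for n
    by (cases n) (simp_all add: algebra_simps)
qed

lemma bernoulli_fps_mult_inverse:
  "fps_X / (fps_exp 1 - 1) * Abs_fps (\<lambda>n. 1 / fact (Suc n)) = (1 :: real fps)"
proof -
  define G :: "real fps" where "G = Abs_fps (\<lambda>n. 1 / fact (Suc n))"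
  have "fps_X / (fps_exp 1 - 1) = (1 * fps_X) / (G * fps_X)"
    using fps_exp_minus_one[of "1::real"] by (simp add: G_def mult.commute)
  also have "\<dots> = inverse G"
    by (subst fps_divide_cancel) (simp_all add: fps_divide_unit G_def)
  finally show ?thesis by (simp add: G_def inverse_mult_eq_1)
qed

lemma nth_bernoulli_fps: "fps_nth (fps_X / (fps_exp 1 - 1)) l = bernoulli l / fact l"
  by (simp add: bernoulli_def)

lemma sum_fps_exp_eq_bernoulli_fps_mult:
  "(\<Sum>i<k. fps_exp (real i)) = fps_X / (fps_exp 1 - 1) * Abs_fps (\<lambda>n. real k ^ Suc n / fact (Suc n))"
proof -
  define E :: "real \<Rightarrow> real fps" where "E c = Abs_fps (\<lambda>n. c ^ Suc n / fact (Suc n))" for c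
  define S where "S = (\<Sum>i<k. fps_exp (real i))"
  have "fps_X * E 1 = fps_exp 1 - 1"
    unfolding E_def fps_exp_minus_one by simp
  then have "fps_X * E 1 * S = fps_exp 1 ^ k - 1"
    using power_diff_1_eq[of "fps_exp (1::real)" k] by (simp add: S_def fps_exp_power_mult)
  also have "\<dots> = fps_X * E (real k)"
    by (simp only: E_def fps_exp_power_mult mult_1_right fps_exp_minus_one)
  finally have "fps_X * (E 1 * S) = fps_X * E (real k)" by (simp add: mult.assoc)
  then have ES: "E 1 * S = E (real k)" by simp
  have E1: "E 1 = Abs_fps (\<lambda>n. 1 / fact (Suc n))" by (simp add: E_def)
  have "S = fps_X / (fps_exp 1 - 1) * E 1 * S"
    unfolding E1 bernoulli_fps_mult_inverse by simp
  also have "\<dots> = fps_X / (fps_exp 1 - 1) * E (real k)"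
    by (simp add: mult.assoc ES)
  finally show ?thesis by (simp add: S_def E_def)
qed

lemma sum_powers_bernoulli:
  "(\<Sum>i<k. real i ^ j) =
     (\<Sum>l\<le>j. real (Suc j choose l) * bernoulli l * real k ^ (Suc j - l)) / real (Suc j)"
proof -
  have "(\<Sum>i<k. real i ^ j) / fact j =
      (\<Sum>l\<le>j. bernoulli l / fact l * (real k ^ Suc (j - l) / fact (Suc (j - l))))"
    using arg_cong[OF sum_fps_exp_eq_bernoulli_fps_mult, of "\<lambda>f. fps_nth f j" k]
    by (simp add: fps_sum_nth fps_mult_nth nth_bernoulli_fps atLeast0AtMost sum_divide_distrib)
  then have "(\<Sum>i<k. real i ^ j) =
      (\<Sum>l\<le>j. fact j * (bernoulli l / fact l * (real k ^ Suc (j - l) / fact (Suc (j - l)))))"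
    by (simp add: field_simps sum_distrib_left)
  also have "\<dots> = (\<Sum>l\<le>j. real (Suc j choose l) * bernoulli l * real k ^ (Suc j - l) / real (Suc j))"
  proof (rule sum.cong)
    fix l assume "l \<in> {..j}"
    then have l: "Suc j - l = Suc (j - l)" by auto
    have "real (Suc j choose l) = real (Suc j) * fact j / (fact l * fact (Suc (j - l)))"
      using binomial_fact[of l "Suc j"] l \<open>l \<in> {..j}\<close> by (simp del: fact_Suc add: fact_Suc[of j])
    then show "fact j * (bernoulli l / fact l * (real k ^ Suc (j - l) / fact (Suc (j - l)))) =
        real (Suc j choose l) * bernoulli l * real k ^ (Suc j - l) / real (Suc j)"
      unfolding l by (simp del: fact_Suc of_nat_Suc)
  qed simp
  finally show ?thesis by (simp add: sum_divide_distrib)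
qed

lemma fps_nth_power_minus_fps_exp:
  "fps_nth ((- fps_exp (c :: 'a :: field_char_0)) ^ k) j = (-1) ^ k * (of_nat k * c) ^ j / fact j"
  by (cases "even k") (simp_all add: fps_exp_power_mult)

lemma sum_alternating_binomial_power:
  assumes "j < N"
  shows "(\<Sum>k\<le>N. (-1) ^ k * of_nat (N choose k) * of_nat k ^ j) = (0 :: 'a :: field_char_0)"
proof -
  define G :: "'a fps" where "G = Abs_fps (\<lambda>n. 1 / fact (Suc n))"
  \<comment> \<open>The sum is \<open>j!\<close> times the coefficient of \<open>x\<^sup>j\<close> in \<open>(1 - e\<^sup>x)\<^sup>N = x\<^sup>N (- G)\<^sup>N\<close>.\<close>
  have "1 - fps_exp 1 = - (fps_exp 1 - 1 :: 'a fps)" by simp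
  also have "\<dots> = fps_X * - G"
    unfolding fps_exp_minus_one G_def power_one by simp
  finally have "(1 - fps_exp 1) ^ N = fps_X ^ N * (- G) ^ N"
    by (simp only: power_mult_distrib)
  then have "fps_nth ((- fps_exp (1::'a) + 1) ^ N) j = 0"
    using assms by (simp add: fps_X_power_mult_nth)
  moreover have "(- fps_exp (1::'a) + 1) ^ N =
      (\<Sum>k\<le>N. fps_const (of_nat (N choose k)) * (- fps_exp 1) ^ k)"
    by (simp only: binomial_ring power_one mult_1_right fps_of_nat)
  ultimately have "(\<Sum>k\<le>N. of_nat (N choose k) * fps_nth ((- fps_exp (1::'a)) ^ k) j) = 0"
    by (simp add: fps_sum_nth)
  then have "(\<Sum>k\<le>N. (-1) ^ k * of_nat (N choose k) * of_nat k ^ j) / fact j = (0 :: 'a)"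
    by (simp add: fps_nth_power_minus_fps_exp sum_divide_distrib mult_ac)
  then show ?thesis by simp
qed

text \<open>By \<open>lincoeff_power\<close> and linearity, \<open>lincoeff N g\<close> is the coefficient of \<open>k\<close> in \<open>g\<close>
  whenever \<open>g\<close> is a polynomial in \<open>k\<close> of degree at most \<open>N\<close> with \<open>g 0 = 0\<close>.\<close>
definition lincoeff :: "nat \<Rightarrow> (nat \<Rightarrow> real) \<Rightarrow> real" where
  "lincoeff N g = (\<Sum>k=1..N. (-1) ^ (k+1) / real k * real (N choose k) * g k)"

lemma lincoeff_cong: "(\<And>k. 1 \<le> k \<Longrightarrow> g k = h k) \<Longrightarrow> lincoeff N g = lincoeff N h"
  unfolding lincoeff_def by (intro sum.cong) auto

lemma lincoeff_add: "lincoeff N (\<lambda>k. g k + h k) = lincoeff N g + lincoeff N h"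
  unfolding lincoeff_def by (simp only: distrib_left sum.distrib)

lemma lincoeff_diff: "lincoeff N (\<lambda>k. g k - h k) = lincoeff N g - lincoeff N h"
  unfolding lincoeff_def by (simp only: right_diff_distrib sum_subtractf)

lemma lincoeff_if: "lincoeff N (\<lambda>k. if c then g k else 0) = (if c then lincoeff N g else 0)"
  by (simp add: lincoeff_def)

lemma lincoeff_lincomb: "lincoeff N (\<lambda>k. \<Sum>l\<in>A. c l * g l k) = (\<Sum>l\<in>A. c l * lincoeff N (g l))"
  unfolding lincoeff_def sum_distrib_left by (subst sum.swap) (simp only: mult_ac)

lemma lincoeff_power:
  assumes "1 \<le> p" "p \<le> N"
  shows "lincoeff N (\<lambda>k. real k ^ p) = (if p = 1 then 1 else 0)"
proof -
  have "(\<Sum>k\<le>N. (-1) ^ k * real (N choose k) * real k ^ (p - 1)) = 0"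
    using assms by (intro sum_alternating_binomial_power) auto
  then have "(if p = 1 then 1 else 0) + (\<Sum>k=1..N. (-1) ^ k * real (N choose k) * real k ^ (p - 1)) = 0"
    unfolding atMost_atLeast0 using assms by (subst (asm) sum.atLeast_Suc_atMost) (auto simp: power_0_left)
  moreover have "lincoeff N (\<lambda>k. real k ^ p) = - (\<Sum>k=1..N. (-1) ^ k * real (N choose k) * real k ^ (p - 1))"
    unfolding lincoeff_def sum_negf[symmetric]
  proof (rule sum.cong)
    fix k :: nat assume "k \<in> {1..N}"
    moreover have "real k ^ p = real k * real k ^ (p - 1)"
      using assms by (simp add: power_eq_if)
    ultimately show "(-1) ^ (k+1) / real k * real (N choose k) * real k ^ p =
        - ((-1) ^ k * real (N choose k) * real k ^ (p - 1))" by simp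
  qed simp
  ultimately show ?thesis by linarith
qed

lemma lincoeff_power_mult_sum_powers:
  assumes "t \<le> m" "m < N"
  shows "lincoeff N (\<lambda>k. real k ^ t * (\<Sum>i<k. real i ^ (m - t))) = (if t = 0 then bernoulli m else 0)"
proof -
  define j where "j = m - t"
  define c where "c l = real (Suc j choose l) * bernoulli l / real (Suc j)" for l
  have "lincoeff N (\<lambda>k. real k ^ t * (\<Sum>i<k. real i ^ (m - t))) =
      lincoeff N (\<lambda>k. \<Sum>l\<le>j. c l * real k ^ (t + Suc j - l))"
    unfolding j_def[symmetric] sum_powers_bernoulli c_def sum_divide_distrib sum_distrib_left
    by (intro lincoeff_cong sum.cong) (auto simp: power_add[symmetric])
  also have "\<dots> = (\<Sum>l\<le>j. c l * lincoeff N (\<lambda>k. real k ^ (t + Suc j - l)))"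
    by (rule lincoeff_lincomb)
  also have "\<dots> = (\<Sum>l\<le>j. if t = 0 \<and> l = j then c l else 0)"
    using assms by (intro sum.cong refl) (subst lincoeff_power, auto simp: j_def)
  also have "\<dots> = (if t = 0 then bernoulli m else 0)"
    by (simp add: c_def j_def del: of_nat_Suc)
  finally show ?thesis .
qed

text \<open>Unlike the sums in the theorem, this one includes the term \<open>i = 0\<close>, which is \<open>k\<^sup>b\<close> when \<open>a = 0\<close>.\<close>
definition pow_conv :: "nat \<Rightarrow> nat \<Rightarrow> nat \<Rightarrow> real" where
  "pow_conv a b k = (\<Sum>i<k. real i ^ a * real (k - i) ^ b)"

lemma pow_conv_expand:
  "pow_conv a b k =
     (\<Sum>t\<le>b. real (b choose t) * (-1) ^ (b - t) * (real k ^ t * (\<Sum>i<k. real i ^ (a + b - t))))"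
proof -
  have expand: "real i ^ a * real (k - i) ^ b =
      (\<Sum>t\<le>b. real (b choose t) * (-1) ^ (b - t) * (real k ^ t * real i ^ (a + b - t)))"
    if "i < k" for i
  proof -
    have "real (k - i) ^ b = (\<Sum>t\<le>b. real (b choose t) * real k ^ t * (- real i) ^ (b - t))"
      using that binomial_ring[of "real k" "- real i" b] by (simp add: of_nat_diff)
    then have "real i ^ a * real (k - i) ^ b =
        (\<Sum>t\<le>b. real (b choose t) * real k ^ t * (real i ^ a * (- real i) ^ (b - t)))"
      by (simp add: sum_distrib_left mult_ac)
    also have "\<dots> = (\<Sum>t\<le>b. real (b choose t) * (-1) ^ (b - t) * (real k ^ t * real i ^ (a + b - t)))"
    proof (intro sum.cong refl)
      fix t assume "t \<in> {..b}"
      then have "real i ^ a * (- real i) ^ (b - t) = (-1) ^ (b - t) * real i ^ (a + b - t)"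
        by (simp add: power_minus[of "real i"] power_add[symmetric])
      then show "real (b choose t) * real k ^ t * (real i ^ a * (- real i) ^ (b - t)) =
          real (b choose t) * (-1) ^ (b - t) * (real k ^ t * real i ^ (a + b - t))"
        by (simp only: mult_ac)
    qed
    finally show ?thesis .
  qed
  have "pow_conv a b k =
      (\<Sum>i<k. \<Sum>t\<le>b. real (b choose t) * (-1) ^ (b - t) * (real k ^ t * real i ^ (a + b - t)))"
    unfolding pow_conv_def by (intro sum.cong refl expand) simp
  then show ?thesis
    unfolding sum_distrib_left by (subst sum.swap)
qed

lemma lincoeff_pow_conv:
  assumes "a + b = m" "m < N"
  shows "lincoeff N (pow_conv a b) = (-1) ^ b * bernoulli m"
proof -
  have "lincoeff N (pow_conv a b) = (\<Sum>t\<le>b. real (b choose t) * (-1) ^ (b - t) *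
      lincoeff N (\<lambda>k. real k ^ t * (\<Sum>i<k. real i ^ (m - t))))"
    unfolding pow_conv_expand[abs_def] assms(1) by (rule lincoeff_lincomb)
  also have "\<dots> = (\<Sum>t\<le>b. if t = 0 then (-1) ^ b * bernoulli m else 0)"
    using assms by (intro sum.cong refl) (simp add: lincoeff_power_mult_sum_powers)
  finally show ?thesis by simp
qed

lemma sum_conv_eq_pow_conv:
  assumes "1 \<le> k"
  shows "(\<Sum>i=1..k-1. real i ^ a * real (k - i) ^ b) = pow_conv a b k - (if a = 0 then real k ^ b else 0)"
proof -
  have "{..<k} = insert 0 {1..k-1}" using assms by auto
  then show ?thesis by (simp add: pow_conv_def)
qed

lemma pow_conv_swap_ends:
  assumes "1 \<le> m"
  shows "pow_conv 0 m k = pow_conv m 0 k + real k ^ m"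
proof -
  have "pow_conv 0 m k = (\<Sum>i<k. real (Suc (k - Suc i)) ^ m)"
    unfolding pow_conv_def by (intro sum.cong) (auto simp: Suc_diff_Suc)
  also have "\<dots> = (\<Sum>i<k. real (Suc i) ^ m)"
    by (rule sum.nat_diff_reindex)
  also have "\<dots> = (\<Sum>i<Suc k. real i ^ m)"
    using assms by (subst sum.lessThan_Suc_shift) simp
  finally show ?thesis by (simp add: pow_conv_def)
qed

lemma bernoulli_reflection:
  assumes "1 \<le> m"
  shows "(-1) ^ m * bernoulli m = bernoulli m + (if m = 1 then 1 else 0)"
proof -
  have "(-1) ^ m * bernoulli m = lincoeff (Suc m) (pow_conv 0 m)"
    using lincoeff_pow_conv[of 0 m m "Suc m"] by simp
  also have "pow_conv 0 m = (\<lambda>k. pow_conv m 0 k + real k ^ m)"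
    using assms by (simp add: fun_eq_iff pow_conv_swap_ends)
  also have "lincoeff (Suc m) \<dots> = bernoulli m + (if m = 1 then 1 else 0)"
    using assms by (simp add: lincoeff_add lincoeff_pow_conv lincoeff_power)
  finally show ?thesis .
qed

theorem theorem2:
  fixes m n a :: nat
  assumes "a \<le> m" and "m \<le> n"
  shows "(bernoulli m = (-1) ^ a * (\<Sum>k=1..n+1. ((-1) ^ (k+1) / real k) * real (Suc n choose k) *
            ((\<Sum>i=1..k-1. real i ^ a * real (k - i) ^ (m - a)) + (if a = m then real k ^ m else 0)))) \<and>
         (m \<ge> 2 \<longrightarrow> bernoulli m = (-1) ^ a * (\<Sum>k=1..n+1. ((-1) ^ (k+1) / real k) * real (Suc n choose k) *
            (\<Sum>i=1..k-1. real i ^ a * real (k - i) ^ (m - a))))"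
proof -
  define T where "T k = (\<Sum>i=1..k-1. real i ^ a * real (k - i) ^ (m - a))" for k
  define P where "P = lincoeff (Suc n) (\<lambda>k. real k ^ m)"
  have P: "1 \<le> m \<Longrightarrow> P = (if m = 1 then 1 else 0)"
    using assms by (simp add: P_def lincoeff_power)
  have "lincoeff (Suc n) T = lincoeff (Suc n) (\<lambda>k. pow_conv a (m - a) k - (if a = 0 then real k ^ m else 0))"
    by (rule lincoeff_cong) (simp only: T_def sum_conv_eq_pow_conv, simp)
  also have "\<dots> = (-1) ^ (m - a) * bernoulli m - (if a = 0 then P else 0)"
    using assms by (simp add: lincoeff_diff lincoeff_pow_conv[of a "m - a" m] lincoeff_if P_def)
  finally have "(-1) ^ a * lincoeff (Suc n) T = (-1) ^ m * bernoulli m - (if a = 0 then (-1) ^ a * P else 0)"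
    using assms by (simp add: right_diff_distrib mult.assoc power_add[symmetric])
  moreover have "lincoeff (Suc n) (\<lambda>k. T k + (if a = m then real k ^ m else 0)) =
      lincoeff (Suc n) T + (if a = m then P else 0)"
    by (simp add: lincoeff_add lincoeff_if P_def)
  \<comment> \<open>For \<open>m \<ge> 2\<close> the terms with \<open>P\<close> vanish; for \<open>m \<le> 1\<close> they make up the defect of \<open>bernoulli_reflection\<close>.\<close>
  ultimately have "bernoulli m = (-1) ^ a * lincoeff (Suc n) (\<lambda>k. T k + (if a = m then real k ^ m else 0)) \<and>
      (m \<ge> 2 \<longrightarrow> bernoulli m = (-1) ^ a * lincoeff (Suc n) T)"
    using assms P bernoulli_reflection[of m] by (cases "m = 0 \<or> m = 1") (auto simp: distrib_left)
  then show ?thesis unfolding T_def lincoeff_def Suc_eq_plus1 .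
qed

end
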